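(* If $(M,+,0)$ is a naturally ordered commutative compact Hausdorff topological monoid, then the partially ordered set $(M,\le)$ is bounded, i.e., it has a greatest element.
   Context: A topological monoid is a monoid with a topology making the operation continuous. For a commutative monoid $(M,+,0)$, define $x\le y$ iff there is $z\in M$ with $x+z=y$; this is a preorder, and $M$ is naturally ordered if it is antisymmetric (so $(M,\le)$ is a partial order with least element $0$). *)

theory Defs
  imports "HOL-Analysis.Analysis"
begin

definition alg_le :: "'a::comm_monoid_add \<Rightarrow> 'a \<Rightarrow> bool" where
  "alg_le x y \<longleftrightarrow> (\<exists>z. x + z = y)"

definition naturally_ordered :: "'a::comm_monoid_add itself \<Rightarrow> bool" where
  "naturally_ordered _ \<longleftrightarrow> (\<forall>x y::'a. alg_le x y \<and> alg_le y x \<longrightarrow> x = y)"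

end

theory Submission
  imports Defs
begin

text \<open>Every up-set \<open>x + M\<close> is the continuous image of the compact space \<open>M\<close>, hence closed,
  and any finitely many of them contain the sum of their generators. By compactness all
  up-sets have a common point, which is then above every element.\<close>

lemma alg_le_iff_in_range_plus: "alg_le x y \<longleftrightarrow> y \<in> range ((+) x)"
  unfolding alg_le_def by auto

lemma alg_le_sum:
  fixes X :: "'a::comm_monoid_add set"
  assumes "finite X" and "x \<in> X"
  shows "alg_le x (\<Sum>X)"
  unfolding alg_le_def using sum.remove[OF assms, of id] by auto

lemma closed_range_plus:
  fixes x :: "'a::{topological_comm_monoid_add, t2_space}"
  assumes "compact (UNIV :: 'a set)"
  shows "closed (range ((+) x))"
proof -
  have "continuous_on UNIV ((+) x)"
    by (intro continuous_intros)
  then show ?thesis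
    using assms by (intro compact_imp_closed compact_continuous_image)
qed

lemma compact_monoid_has_alg_upper_bound:
  assumes "compact (UNIV :: 'a::{topological_comm_monoid_add, t2_space} set)"
  shows "\<exists>m::'a. \<forall>x. alg_le x m"
proof -
  have "UNIV \<inter> (\<Inter>x\<in>UNIV. range ((+) x)) \<noteq> ({} :: 'a set)"
  proof (rule compact_imp_fip_image[OF assms])
    show "closed (range ((+) x))" for x :: 'a
      using assms by (rule closed_range_plus)
    show "UNIV \<inter> (\<Inter>x\<in>X. range ((+) x)) \<noteq> {}" if "finite X" for X :: "'a set"
      using alg_le_sum[OF \<open>finite X\<close>] by (auto simp: alg_le_iff_in_range_plus)
  qed
  then show ?thesis
    by (auto simp: alg_le_iff_in_range_plus)
qed

theorem proposition3p4:
  assumes "naturally_ordered TYPE('a::{topological_comm_monoid_add, t2_space})"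
    and "compact (UNIV :: 'a set)"
  shows "\<exists>m::'a. \<forall>x. alg_le x m"
  using assms(2) by (rule compact_monoid_has_alg_upper_bound)

end
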